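(* Let $u(x,y):=\frac13(y^3-x^3)$ for $(x,y)\in(-1,1)^2$, and let $X$ be the gradient flow $X'(t,x,y)=\nabla u(X(t,x,y))$, $X(0,x,y)=(x,y)$. i) In the open set $\Omega=(0,1)\times(-1,0)$ (resp. $(-1,0)\times(0,1)$), the point $(0,0)$ is positively (resp. negatively) stable for this flow. However, $\nabla u$ is not isotropically realizable in $\Omega$ (i.e. there is no solution of $\mathrm{div}(\sigma\nabla u)=0$ in $\Omega$) with any positive conductivity $\sigma\in C^1(\Omega)\cap L^\infty(\Omega)$. ii) In the open set $\Omega=(0,1)^2$ or $(-1,0)^2$, the point $(0,0)$ is not stable. Moreover, $\nabla u$ is isotropically realizable in $\Omega$ with some positive conductivity $\sigma_0\in C^1(\Omega)\cap L^\infty(\Omega)$. However, $\nabla u$ is not realizable in $\Omega$ with any positive conductivity $\sigma\in C^1(\Omega)\cap L^\infty(\Omega)$ such that $\sigma^{-1}\in L^\infty(\Omega)$.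
   Context: $(0,0)$ is the unique critical point of $u$ in $(-1,1)^2$ and $\nabla^2u(0,0)=0$ (non-hyperbolic). A critical point $x_*$ is positively (resp. negatively) stable in the considered region if there are a compact neighborhood $K_*$ of $x_*$ containing no other critical point and a neighborhood $Q_*\subset\mathrm{int}(K_* )$ of $x_*$ such that $X(t,x)\in K_*$ for all $x\in Q_*$ and all $t\ge0$ (resp. all $t\le0$). *)

theory Defs
  imports "HOL-Analysis.Analysis"
begin

definition u :: "real \<times> real \<Rightarrow> real" where
  "u p = ((snd p)^3 - (fst p)^3) / 3"

definition grad_u :: "real \<times> real \<Rightarrow> real \<times> real" where
  "grad_u p = (- ((fst p)^2), ((snd p)^2))"

lemma grad_u_is_gradient:
  "(u has_derivative (\<lambda>h. grad_u p \<bullet> h)) (at p)"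
proof -
  have "(u has_derivative (\<lambda>h. ((3 * (snd p)^2 * snd h) - (3 * (fst p)^2 * fst h)) / 3)) (at p)"
    unfolding u_def
    by (auto intro!: derivative_eq_intros simp: field_simps)
  moreover have "(\<lambda>h. ((3 * (snd p)^2 * snd h) - (3 * (fst p)^2 * fst h)) / 3) = (\<lambda>h. grad_u p \<bullet> h)"
    by (auto simp: grad_u_def inner_prod_def field_simps fun_eq_iff)
  ultimately show ?thesis by simp
qed

definition square :: "(real \<times> real) set" where
  "square = {-1<..<1} \<times> {-1<..<1}"

text \<open>Since F is smooth, trajectories are unique, so the existence of
  such a solution is the same as the flow X(t,x) being in K for all t \<ge> 0.\<close>
definition pos_stable ::
  "(real \<times> real) set \<Rightarrow> (real \<times> real \<Rightarrow> real \<times> real) \<Rightarrow> real \<times> real \<Rightarrow> bool" where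
  "pos_stable \<Omega> F z \<longleftrightarrow>
     (\<exists>K. compact K \<and> K \<subseteq> closure \<Omega> \<inter> square \<and>
        (\<exists>U. open U \<and> z \<in> U \<and> U \<inter> \<Omega> \<subseteq> K) \<and>
        (\<forall>q\<in>K. F q = 0 \<longrightarrow> q = z) \<and>
        (\<exists>V. open V \<and> z \<in> V \<and> V \<inter> \<Omega> \<subseteq> K \<and>
           (\<forall>x\<in>V \<inter> \<Omega>. \<exists>\<gamma>. \<gamma> 0 = x \<and>
              (\<forall>t\<ge>0. (\<gamma> has_vector_derivative F (\<gamma> t)) (at t within {0..}) \<and> \<gamma> t \<in> K))))"

definition neg_stable ::
  "(real \<times> real) set \<Rightarrow> (real \<times> real \<Rightarrow> real \<times> real) \<Rightarrow> real \<times> real \<Rightarrow> bool" where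
  "neg_stable \<Omega> F z \<longleftrightarrow>
     (\<exists>K. compact K \<and> K \<subseteq> closure \<Omega> \<inter> square \<and>
        (\<exists>U. open U \<and> z \<in> U \<and> U \<inter> \<Omega> \<subseteq> K) \<and>
        (\<forall>q\<in>K. F q = 0 \<longrightarrow> q = z) \<and>
        (\<exists>V. open V \<and> z \<in> V \<and> V \<inter> \<Omega> \<subseteq> K \<and>
           (\<forall>x\<in>V \<inter> \<Omega>. \<exists>\<gamma>. \<gamma> 0 = x \<and>
              (\<forall>t\<le>0. (\<gamma> has_vector_derivative F (\<gamma> t)) (at t within {..0}) \<and> \<gamma> t \<in> K))))"

text \<open>sigma is in C^1(\<Omega>) (continuous partial derivatives), positive, and in L^\<infinity>(\<Omega>)
  (for a continuous function on an open set this is boundedness).\<close>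
definition pos_C1_Linf :: "(real \<times> real) set \<Rightarrow> (real \<times> real \<Rightarrow> real) \<Rightarrow> bool" where
  "pos_C1_Linf \<Omega> \<sigma> \<longleftrightarrow>
     (\<forall>p\<in>\<Omega>. \<sigma> p > 0) \<and>
     (\<exists>\<sigma>x \<sigma>y. continuous_on \<Omega> \<sigma>x \<and> continuous_on \<Omega> \<sigma>y \<and>
        (\<forall>p\<in>\<Omega>. (\<sigma> has_derivative (\<lambda>h. \<sigma>x p * fst h + \<sigma>y p * snd h)) (at p))) \<and>
     bounded (\<sigma> ` \<Omega>)"

definition div_free :: "(real \<times> real) set \<Rightarrow> (real \<times> real \<Rightarrow> real \<times> real) \<Rightarrow> bool" where
  "div_free \<Omega> w \<longleftrightarrow>
     (\<forall>p\<in>\<Omega>. \<exists>D. (w has_derivative D) (at p) \<and> fst (D (1,0)) + snd (D (0,1)) = 0)"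

definition realizable_with :: "(real \<times> real) set \<Rightarrow> (real \<times> real \<Rightarrow> real) \<Rightarrow> bool" where
  "realizable_with \<Omega> \<sigma> \<longleftrightarrow> div_free \<Omega> (\<lambda>p. \<sigma> p *\<^sub>R grad_u p)"

end

theory Submission
  imports Defs
begin

text \<open>The flow of \<open>\<nabla>u = (-x\<^sup>2, y\<^sup>2)\<close> is explicit, \<open>X(t) = (x/(1+xt), y/(1-yt))\<close>.
  In the second and fourth quadrants it contracts both coordinates towards 0, which gives stability;
  in the first and third quadrants one coordinate obeys the Riccati equation \<open>k' = \<plusminus>k\<^sup>2\<close>
  and leaves the square in finite time.
  A conductivity with \<open>div(\<sigma>\<nabla>u) = \<nabla>\<sigma>\<cdot>\<nabla>u + 2\<sigma>(y - x) = 0\<close> makes \<open>\<sigma>\<cdot>(xy)\<^sup>2\<close> constant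
  along every orbit. On the anti-diagonal of the second and fourth quadrants the orbit tends to 0,
  so \<open>\<sigma>\<close> cannot be bounded; in the first and third quadrants orbits exist along which \<open>xy\<close>
  shrinks by an arbitrarily large factor, so \<open>\<sigma>\<close> and \<open>1/\<sigma>\<close> cannot both be bounded, although
  \<open>\<sigma>\<^sub>0 = (xy)\<^sup>2/(x+y)\<^sup>4\<close> is a bounded solution.\<close>

definition flow :: "real \<times> real \<Rightarrow> real \<Rightarrow> real \<times> real" where
  "flow p t = (fst p / (1 + fst p * t), snd p / (1 - snd p * t))"

lemma flow_0 [simp]: "flow p 0 = p"
  by (simp add: flow_def)

lemma flow_has_vector_derivative:
  assumes "1 + fst p * t \<noteq> 0" "1 - snd p * t \<noteq> 0"
  shows "(flow p has_vector_derivative grad_u (flow p t)) (at t within S)"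
  unfolding flow_def[abs_def] grad_u_def
  using assms
  by (auto intro!: derivative_eq_intros simp: has_real_derivative_iff_has_vector_derivative[symmetric]
      field_simps power2_eq_square)

text \<open>A vanishing denominator would make the coordinate \<open>0\<close> (as \<open>x / 0 = 0\<close>), so off the axes the
  flow is regular.\<close>
lemma flow_has_vector_derivative_off_axes:
  assumes "fst (flow p t) * snd (flow p t) \<noteq> 0"
  shows "(flow p has_vector_derivative grad_u (flow p t)) (at t within S)"
  using assms by (intro flow_has_vector_derivative) (auto simp: flow_def)

lemma grad_u_has_derivative:
  "(grad_u has_derivative (\<lambda>h. (- (2 * fst p * fst h), 2 * snd p * snd h))) (at p)"
  unfolding grad_u_def by (auto intro!: derivative_eq_intros)

lemma realizable_with_iff:
  assumes \<sigma>: "\<And>p. p \<in> \<Omega> \<Longrightarrow> (\<sigma> has_derivative (\<lambda>h. sx p * fst h + sy p * snd h)) (at p)"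
  shows "realizable_with \<Omega> \<sigma> \<longleftrightarrow>
    (\<forall>p\<in>\<Omega>. sy p * (snd p)^2 - sx p * (fst p)^2 = 2 * \<sigma> p * (fst p - snd p))"
proof -
  define D where "D p h = \<sigma> p *\<^sub>R (- (2 * fst p * fst h), 2 * snd p * snd h)
    + (sx p * fst h + sy p * snd h) *\<^sub>R grad_u p" for p h
  have D: "((\<lambda>q. \<sigma> q *\<^sub>R grad_u q) has_derivative D p) (at p)" if "p \<in> \<Omega>" for p
    unfolding D_def by (rule has_derivative_scaleR[OF \<sigma>[OF that] grad_u_has_derivative])
  have "(\<exists>D'. ((\<lambda>q. \<sigma> q *\<^sub>R grad_u q) has_derivative D') (at p) \<and> fst (D' (1,0)) + snd (D' (0,1)) = 0)
    \<longleftrightarrow> sy p * (snd p)^2 - sx p * (fst p)^2 = 2 * \<sigma> p * (fst p - snd p)" if "p \<in> \<Omega>" for p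
  proof -
    have "(\<exists>D'. ((\<lambda>q. \<sigma> q *\<^sub>R grad_u q) has_derivative D') (at p) \<and> fst (D' (1,0)) + snd (D' (0,1)) = 0)
      \<longleftrightarrow> fst (D p (1,0)) + snd (D p (0,1)) = 0"
      using D[OF that] has_derivative_unique[OF D[OF that]] by blast
    moreover have "fst (D p (1,0)) + snd (D p (0,1))
      = sx p * - ((fst p)^2) + sy p * (snd p)^2 + 2 * \<sigma> p * (snd p - fst p)"
      by (simp add: D_def grad_u_def algebra_simps)
    ultimately show ?thesis by (auto simp: algebra_simps)
  qed
  then show ?thesis unfolding realizable_with_def div_free_def by blast
qed

lemma realizable_first_integral:
  assumes \<sigma>: "pos_C1_Linf \<Omega> \<sigma>" "realizable_with \<Omega> \<sigma>"
    and S: "convex S" "\<gamma> ` S \<subseteq> \<Omega>"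
    and \<gamma>: "\<And>t. t \<in> S \<Longrightarrow> (\<gamma> has_vector_derivative grad_u (\<gamma> t)) (at t within S)"
    and "a \<in> S" "b \<in> S"
  shows "\<sigma> (\<gamma> a) * (fst (\<gamma> a) * snd (\<gamma> a))^2 = \<sigma> (\<gamma> b) * (fst (\<gamma> b) * snd (\<gamma> b))^2"
proof -
  define w where "w q = \<sigma> q * (fst q * snd q)^2" for q
  obtain sx sy where ds: "\<And>q. q \<in> \<Omega> \<Longrightarrow> (\<sigma> has_derivative (\<lambda>h. sx q * fst h + sy q * snd h)) (at q)"
    using \<sigma>(1) unfolding pos_C1_Linf_def by blast
  have w_deriv: "(w has_derivative (\<lambda>h. (sx q * fst h + sy q * snd h) * (fst q * snd q)^2
      + \<sigma> q * (2 * (fst q * snd q) * (fst h * snd q + fst q * snd h)))) (at q)" if "q \<in> \<Omega>" for q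
    unfolding w_def[abs_def]
    by (auto intro!: derivative_eq_intros ds[OF that] simp: algebra_simps power2_eq_square)
  have "((\<lambda>t. w (\<gamma> t)) has_derivative (\<lambda>h. 0)) (at t within S)" if t: "t \<in> S" for t
  proof -
    define q where "q = \<gamma> t"
    have q: "q \<in> \<Omega>" using S(2) t q_def by blast
    have tr: "sy q * (snd q)^2 - sx q * (fst q)^2 = 2 * \<sigma> q * (fst q - snd q)"
      using \<sigma>(2) q by (simp add: realizable_with_iff[OF ds])
    have "(sx q * fst (h *\<^sub>R grad_u q) + sy q * snd (h *\<^sub>R grad_u q)) * (fst q * snd q)^2
        + \<sigma> q * (2 * (fst q * snd q) * (fst (h *\<^sub>R grad_u q) * snd q + fst q * snd (h *\<^sub>R grad_u q)))
      = h * (fst q * snd q)^2 * ((sy q * (snd q)^2 - sx q * (fst q)^2) - 2 * \<sigma> q * (fst q - snd q))" for h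
      by (simp add: grad_u_def algebra_simps power2_eq_square)
    then show ?thesis
      using has_derivative_in_compose[OF \<gamma>[OF t, unfolded has_vector_derivative_def]
          has_derivative_at_withinI[OF w_deriv[OF q, unfolded q_def]], folded q_def]
      unfolding tr by simp
  qed
  then show ?thesis
    using has_derivative_zero_unique[OF S(1)] \<open>a \<in> S\<close> \<open>b \<in> S\<close> unfolding w_def by blast
qed

lemma realizable_along_flow:
  assumes \<sigma>: "pos_C1_Linf \<Omega> \<sigma>" "realizable_with \<Omega> \<sigma>"
    and off_axes: "\<forall>q\<in>\<Omega>. fst q * snd q \<noteq> 0"
    and path: "flow p ` closed_segment 0 t \<subseteq> \<Omega>"
  shows "\<sigma> (flow p t) = \<sigma> p * ((1 + fst p * t) * (1 - snd p * t))^2"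
proof -
  have conserved: "\<sigma> (flow p 0) * (fst (flow p 0) * snd (flow p 0))^2
      = \<sigma> (flow p t) * (fst (flow p t) * snd (flow p t))^2"
  proof (rule realizable_first_integral[OF \<sigma> convex_closed_segment path])
    fix s assume "s \<in> closed_segment 0 t"
    with path off_axes have "fst (flow p s) * snd (flow p s) \<noteq> 0" by blast
    then show "(flow p has_vector_derivative grad_u (flow p s)) (at s within closed_segment 0 t)"
      by (rule flow_has_vector_derivative_off_axes)
  qed auto
  have "fst (flow p t) * snd (flow p t) \<noteq> 0" "fst p * snd p \<noteq> 0"
    using path off_axes flow_0 by (metis ends_in_segment image_subset_iff)+
  then have "(1 + fst p * t) * (1 - snd p * t) \<noteq> 0"
    and "fst (flow p t) * snd (flow p t) = fst p * snd p / ((1 + fst p * t) * (1 - snd p * t))"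
    by (auto simp: flow_def)
  with conserved \<open>fst p * snd p \<noteq> 0\<close> show ?thesis
    by (simp add: power_divide field_simps)
qed

lemma contraction_mem_Ioo:
  fixes x t a b :: real
  assumes "x \<in> {a<..<b}" "a \<le> 0" "0 \<le> b" "0 \<le> x * t"
  shows "x / (1 + x * t) \<in> {a<..<b}"
proof -
  define c where "c = 1 / (1 + x * t)"
  have c: "0 < c" "c \<le> 1" using assms(4) by (auto simp: c_def)
  have "a \<le> c * a" "c * a < c * x"
    using c assms(1,2) by (auto simp: mult_le_cancel_right1)
  moreover have "c * x < c * b" "c * b \<le> b"
    using c assms(1,3) by (auto simp: mult_left_le_one_le)
  ultimately show ?thesis by (simp add: c_def)
qed

lemma flow_mem_box:
  assumes "p \<in> {a<..<b} \<times> {c<..<d}" "a \<le> 0" "0 \<le> b" "c \<le> 0" "0 \<le> d"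
    and "0 \<le> fst p * t" "snd p * t \<le> 0"
  shows "flow p t \<in> {a<..<b} \<times> {c<..<d}"
  using contraction_mem_Ioo[of "fst p" a b t] contraction_mem_Ioo[of "snd p" c d "-t"] assms
  by (auto simp: flow_def)

lemma pos_stable_fourth_quadrant: "pos_stable ({0<..<1} \<times> {-1<..<0}) grad_u (0,0)"
proof -
  let ?K = "{0..1/2} \<times> {-1/2..0} :: (real \<times> real) set"
  let ?V = "{-1/2<..<1/2} \<times> {-1/2<..<1/2} :: (real \<times> real) set"
  have V_inter: "?V \<inter> {0<..<1} \<times> {-1<..<0} = {0<..<1/2} \<times> {-1/2<..<0}" by auto
  have "\<exists>\<gamma>. \<gamma> 0 = p \<and> (\<forall>t\<ge>0. (\<gamma> has_vector_derivative grad_u (\<gamma> t)) (at t within {0..}) \<and> \<gamma> t \<in> ?K)"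
    if p: "p \<in> {0<..<1/2} \<times> {-1/2<..<0}" for p
  proof (intro exI[of _ "flow p"] conjI allI impI)
    fix t :: real assume "0 \<le> t"
    with p have "flow p t \<in> {0<..<1/2} \<times> {-1/2<..<0}"
      by (intro flow_mem_box) (auto simp: mult_nonpos_nonneg)
    then show "(flow p has_vector_derivative grad_u (flow p t)) (at t within {0..})" "flow p t \<in> ?K"
      by (auto intro!: flow_has_vector_derivative_off_axes)
  qed simp
  then show ?thesis
    unfolding pos_stable_def V_inter
    by (intro exI[of _ ?K] conjI exI[of _ ?V])
      (auto simp: closure_Times square_def grad_u_def zero_prod_def intro!: compact_Times open_Times)
qed

lemma neg_stable_second_quadrant: "neg_stable ({-1<..<0} \<times> {0<..<1}) grad_u (0,0)"
proof -
  let ?K = "{-1/2..0} \<times> {0..1/2} :: (real \<times> real) set"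
  let ?V = "{-1/2<..<1/2} \<times> {-1/2<..<1/2} :: (real \<times> real) set"
  have V_inter: "?V \<inter> {-1<..<0} \<times> {0<..<1} = {-1/2<..<0} \<times> {0<..<1/2}" by auto
  have "\<exists>\<gamma>. \<gamma> 0 = p \<and> (\<forall>t\<le>0. (\<gamma> has_vector_derivative grad_u (\<gamma> t)) (at t within {..0}) \<and> \<gamma> t \<in> ?K)"
    if p: "p \<in> {-1/2<..<0} \<times> {0<..<1/2}" for p
  proof (intro exI[of _ "flow p"] conjI allI impI)
    fix t :: real assume "t \<le> 0"
    with p have "flow p t \<in> {-1/2<..<0} \<times> {0<..<1/2}"
      by (intro flow_mem_box) (auto simp: mult_nonpos_nonpos mult_nonneg_nonpos)
    then show "(flow p has_vector_derivative grad_u (flow p t)) (at t within {..0})" "flow p t \<in> ?K"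
      by (auto intro!: flow_has_vector_derivative_off_axes)
  qed simp
  then show ?thesis
    unfolding neg_stable_def V_inter
    by (intro exI[of _ ?K] conjI exI[of _ ?V])
      (auto simp: closure_Times square_def grad_u_def zero_prod_def intro!: compact_Times open_Times)
qed

lemma riccati_unbounded:
  fixes k :: "real \<Rightarrow> real"
  assumes k0: "0 < k 0"
    and k': "\<And>t. 0 \<le> t \<Longrightarrow> (k has_real_derivative (k t)^2) (at t within {0..})"
  shows "\<exists>t\<ge>0. c \<le> k t"
proof -
  have mvt: "\<exists>x\<in>{0..t}. k t - k 0 = (k x)^2 * t" if "0 \<le> t" for t
  proof -
    have "(k has_derivative (\<lambda>h. (k x)^2 * h)) (at x within {0..t})" if "0 \<le> x" for x
      using k'[OF that] by (auto simp: has_field_derivative_def intro: has_derivative_subset)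
    then show ?thesis using mvt_very_simple[OF \<open>0 \<le> t\<close>, of k "\<lambda>x h. (k x)^2 * h"] by simp
  qed
  have mono: "k 0 \<le> k t" if t: "0 \<le> t" for t
  proof -
    obtain x where "k t - k 0 = (k x)^2 * t" using mvt[OF t] by blast
    moreover have "0 \<le> (k x)^2 * t" using t by simp
    ultimately show ?thesis by linarith
  qed
  define t where "t = \<bar>c\<bar> / (k 0)^2"
  have "0 \<le> t" by (simp add: t_def)
  then obtain x where x: "x \<in> {0..t}" "k t - k 0 = (k x)^2 * t" using mvt by blast
  have "(k 0)^2 * t \<le> (k x)^2 * t"
    using mono[of x] x(1) k0 \<open>0 \<le> t\<close> by (intro mult_right_mono power_mono) auto
  then have "k 0 + \<bar>c\<bar> \<le> k t" using x(2) k0 by (simp add: t_def)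
  then show ?thesis using \<open>0 \<le> t\<close> k0 by (intro exI[of _ t]) auto
qed

lemma riccati_unbounded_backward:
  fixes k :: "real \<Rightarrow> real"
  assumes k0: "0 < k 0"
    and k': "\<And>t. t \<le> 0 \<Longrightarrow> (k has_real_derivative (- ((k t)^2))) (at t within {..0})"
  shows "\<exists>t\<le>0. c \<le> k t"
proof -
  have "((k \<circ> uminus) has_real_derivative ((k \<circ> uminus) t)^2) (at t within {0..})" if "0 \<le> t" for t
  proof -
    have "uminus ` {0..} = {..0::real}" by (auto intro: image_eqI[of _ _ "- _"])
    with k'[of "- t"] that
    have "(k has_real_derivative - ((k (- t))^2)) (at (- t) within uminus ` {0..})" by simp
    from DERIV_image_chain[OF this DERIV_minus[OF DERIV_ident]] show ?thesis by simp
  qed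
  from riccati_unbounded[of "k \<circ> uminus", OF _ this] k0 obtain t where "0 \<le> t" "c \<le> k (- t)"
    by auto
  then show ?thesis by (intro exI[of _ "- t"]) auto
qed

lemma gradient_orbit_components:
  assumes "(\<gamma> has_vector_derivative grad_u (\<gamma> t)) (at t within S)"
  shows "((\<lambda>t. snd (\<gamma> t)) has_real_derivative (snd (\<gamma> t))^2) (at t within S)"
    and "((\<lambda>t. - fst (\<gamma> t)) has_real_derivative (- fst (\<gamma> t))^2) (at t within S)"
    and "((\<lambda>t. fst (\<gamma> t)) has_real_derivative (- ((fst (\<gamma> t))^2))) (at t within S)"
    and "((\<lambda>t. - snd (\<gamma> t)) has_real_derivative (- ((- snd (\<gamma> t))^2))) (at t within S)"
proof -
  note \<gamma> = assms[unfolded has_vector_derivative_def]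
  have fst: "((\<lambda>t. fst (\<gamma> t)) has_real_derivative (- ((fst (\<gamma> t))^2))) (at t within S)"
    unfolding has_field_derivative_def
    by (rule has_derivative_eq_rhs[OF has_derivative_fst[OF \<gamma>]]) (auto simp: grad_u_def)
  have snd: "((\<lambda>t. snd (\<gamma> t)) has_real_derivative (snd (\<gamma> t))^2) (at t within S)"
    unfolding has_field_derivative_def
    by (rule has_derivative_eq_rhs[OF has_derivative_snd[OF \<gamma>]]) (auto simp: grad_u_def)
  show "((\<lambda>t. snd (\<gamma> t)) has_real_derivative (snd (\<gamma> t))^2) (at t within S)"
    and "((\<lambda>t. fst (\<gamma> t)) has_real_derivative (- ((fst (\<gamma> t))^2))) (at t within S)"
    by (fact snd, fact fst)
  show "((\<lambda>t. - fst (\<gamma> t)) has_real_derivative (- fst (\<gamma> t))^2) (at t within S)"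
    and "((\<lambda>t. - snd (\<gamma> t)) has_real_derivative (- ((- snd (\<gamma> t))^2))) (at t within S)"
    using DERIV_minus[OF fst] DERIV_minus[OF snd] by simp_all
qed

lemma forward_gradient_orbit_leaves_square:
  assumes \<gamma>: "\<And>t. 0 \<le> t \<Longrightarrow> (\<gamma> has_vector_derivative grad_u (\<gamma> t)) (at t within {0..})"
    and start: "0 < snd (\<gamma> 0) \<or> fst (\<gamma> 0) < 0"
  shows "\<exists>t\<ge>0. \<gamma> t \<notin> square"
proof -
  from start obtain t where "0 \<le> t" "1 \<le> snd (\<gamma> t) \<or> 1 \<le> - fst (\<gamma> t)"
  proof
    assume "0 < snd (\<gamma> 0)"
    from riccati_unbounded[of "\<lambda>t. snd (\<gamma> t)", OF this gradient_orbit_components(1)[OF \<gamma>]]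
    show thesis using that by blast
  next
    assume "fst (\<gamma> 0) < 0"
    then have "0 < - fst (\<gamma> 0)" by simp
    from riccati_unbounded[of "\<lambda>t. - fst (\<gamma> t)", OF this gradient_orbit_components(2)[OF \<gamma>]]
    show thesis using that by blast
  qed
  then show ?thesis by (auto simp: square_def)
qed

lemma backward_gradient_orbit_leaves_square:
  assumes \<gamma>: "\<And>t. t \<le> 0 \<Longrightarrow> (\<gamma> has_vector_derivative grad_u (\<gamma> t)) (at t within {..0})"
    and start: "0 < fst (\<gamma> 0) \<or> snd (\<gamma> 0) < 0"
  shows "\<exists>t\<le>0. \<gamma> t \<notin> square"
proof -
  from start obtain t where "t \<le> 0" "1 \<le> fst (\<gamma> t) \<or> 1 \<le> - snd (\<gamma> t)"
  proof
    assume "0 < fst (\<gamma> 0)"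
    from riccati_unbounded_backward[of "\<lambda>t. fst (\<gamma> t)", OF this gradient_orbit_components(3)[OF \<gamma>]]
    show thesis using that by blast
  next
    assume "snd (\<gamma> 0) < 0"
    then have "0 < - snd (\<gamma> 0)" by simp
    from riccati_unbounded_backward[of "\<lambda>t. - snd (\<gamma> t)", OF this gradient_orbit_components(4)[OF \<gamma>]]
    show thesis using that by blast
  qed
  then show ?thesis by (auto simp: square_def)
qed

lemma not_pos_stable:
  assumes "(0,0) \<in> closure \<Omega>" and escape: "\<And>p. p \<in> \<Omega> \<Longrightarrow> 0 < snd p \<or> fst p < 0"
  shows "\<not> pos_stable \<Omega> grad_u (0,0)"
proof
  assume "pos_stable \<Omega> grad_u (0,0)"
  then obtain K V where K: "K \<subseteq> closure \<Omega> \<inter> square" and V: "open V" "(0,0) \<in> V"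
    and orbits: "\<forall>x\<in>V \<inter> \<Omega>. \<exists>\<gamma>. \<gamma> 0 = x \<and>
      (\<forall>t\<ge>0. (\<gamma> has_vector_derivative grad_u (\<gamma> t)) (at t within {0..}) \<and> \<gamma> t \<in> K)"
    unfolding pos_stable_def by (elim exE conjE) blast
  obtain x where x: "x \<in> V \<inter> \<Omega>"
    using open_Int_closure_eq_empty[OF V(1), of \<Omega>] V(2) assms(1) by blast
  then obtain \<gamma> where "\<gamma> 0 = x"
    and \<gamma>: "\<And>t. 0 \<le> t \<Longrightarrow> (\<gamma> has_vector_derivative grad_u (\<gamma> t)) (at t within {0..}) \<and> \<gamma> t \<in> K"
    using orbits by blast
  moreover have "0 < snd x \<or> fst x < 0" using x escape by blast
  ultimately obtain t where "0 \<le> t" "\<gamma> t \<notin> square"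
    using forward_gradient_orbit_leaves_square[of \<gamma>] \<gamma> by blast
  with \<gamma> K show False by blast
qed

lemma not_neg_stable:
  assumes "(0,0) \<in> closure \<Omega>" and escape: "\<And>p. p \<in> \<Omega> \<Longrightarrow> 0 < fst p \<or> snd p < 0"
  shows "\<not> neg_stable \<Omega> grad_u (0,0)"
proof
  assume "neg_stable \<Omega> grad_u (0,0)"
  then obtain K V where K: "K \<subseteq> closure \<Omega> \<inter> square" and V: "open V" "(0,0) \<in> V"
    and orbits: "\<forall>x\<in>V \<inter> \<Omega>. \<exists>\<gamma>. \<gamma> 0 = x \<and>
      (\<forall>t\<le>0. (\<gamma> has_vector_derivative grad_u (\<gamma> t)) (at t within {..0}) \<and> \<gamma> t \<in> K)"
    unfolding neg_stable_def by (elim exE conjE) blast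
  obtain x where x: "x \<in> V \<inter> \<Omega>"
    using open_Int_closure_eq_empty[OF V(1), of \<Omega>] V(2) assms(1) by blast
  then obtain \<gamma> where "\<gamma> 0 = x"
    and \<gamma>: "\<And>t. t \<le> 0 \<Longrightarrow> (\<gamma> has_vector_derivative grad_u (\<gamma> t)) (at t within {..0}) \<and> \<gamma> t \<in> K"
    using orbits by blast
  moreover have "0 < fst x \<or> snd x < 0" using x escape by blast
  ultimately obtain t where "t \<le> 0" "\<gamma> t \<notin> square"
    using backward_gradient_orbit_leaves_square[of \<gamma>] \<gamma> by blast
  with \<gamma> K show False by blast
qed

lemma not_realizable_if_flow_expands:
  assumes off_axes: "\<forall>q\<in>\<Omega>. fst q * snd q \<noteq> 0" and p: "p \<in> \<Omega>"
    and expands: "\<And>C. \<exists>t. flow p ` closed_segment 0 t \<subseteq> \<Omega> \<and> C \<le> ((1 + fst p * t) * (1 - snd p * t))^2"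
  shows "\<not> (\<exists>\<sigma>. pos_C1_Linf \<Omega> \<sigma> \<and> realizable_with \<Omega> \<sigma>)"
proof
  assume "\<exists>\<sigma>. pos_C1_Linf \<Omega> \<sigma> \<and> realizable_with \<Omega> \<sigma>"
  then obtain \<sigma> where \<sigma>: "pos_C1_Linf \<Omega> \<sigma>" "realizable_with \<Omega> \<sigma>" by blast
  then obtain M where M: "\<And>q. q \<in> \<Omega> \<Longrightarrow> \<sigma> q \<le> M"
    unfolding pos_C1_Linf_def bounded_iff by (auto dest: abs_le_D1)
  have "0 < \<sigma> p" using \<sigma>(1) p by (simp add: pos_C1_Linf_def)
  obtain t where path: "flow p ` closed_segment 0 t \<subseteq> \<Omega>"
    and big: "(M + 1) / \<sigma> p \<le> ((1 + fst p * t) * (1 - snd p * t))^2"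
    using expands by blast
  have "M + 1 \<le> \<sigma> p * ((1 + fst p * t) * (1 - snd p * t))^2"
    using big \<open>0 < \<sigma> p\<close> by (simp add: field_simps)
  also have "\<dots> = \<sigma> (flow p t)"
    using realizable_along_flow[OF \<sigma> off_axes path] by simp
  also have "\<dots> \<le> M" using M path ends_in_segment(2) by blast
  finally show False by simp
qed

lemma not_realizable_bounded_inverse_if_flow_expands:
  assumes off_axes: "\<forall>q\<in>\<Omega>. fst q * snd q \<noteq> 0"
    and expands: "\<And>C. \<exists>p t. flow p ` closed_segment 0 t \<subseteq> \<Omega> \<and> C \<le> ((1 + fst p * t) * (1 - snd p * t))^2"
  shows "\<not> (\<exists>\<sigma>. pos_C1_Linf \<Omega> \<sigma> \<and> bounded ((\<lambda>p. 1 / \<sigma> p) ` \<Omega>) \<and> realizable_with \<Omega> \<sigma>)"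
proof
  assume "\<exists>\<sigma>. pos_C1_Linf \<Omega> \<sigma> \<and> bounded ((\<lambda>p. 1 / \<sigma> p) ` \<Omega>) \<and> realizable_with \<Omega> \<sigma>"
  then obtain \<sigma> where \<sigma>: "pos_C1_Linf \<Omega> \<sigma>" "realizable_with \<Omega> \<sigma>"
    and inv_bounded: "bounded ((\<lambda>p. 1 / \<sigma> p) ` \<Omega>)" by blast
  from \<sigma>(1) obtain M where M: "\<And>q. q \<in> \<Omega> \<Longrightarrow> \<sigma> q \<le> M"
    unfolding pos_C1_Linf_def bounded_iff by (auto dest: abs_le_D1)
  obtain N where "\<forall>x\<in>(\<lambda>p. 1 / \<sigma> p) ` \<Omega>. norm x \<le> N"
    using inv_bounded unfolding bounded_iff by blast
  then have N: "\<And>q. q \<in> \<Omega> \<Longrightarrow> 1 / \<sigma> q \<le> N"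
    unfolding real_norm_def by (blast dest: abs_le_D1)
  obtain p t where path: "flow p ` closed_segment 0 t \<subseteq> \<Omega>"
    and big: "(M + 1) * N \<le> ((1 + fst p * t) * (1 - snd p * t))^2"
    using expands by blast
  have p: "p \<in> \<Omega>" using path flow_0 by (metis ends_in_segment(1) image_subset_iff)
  then have "0 < \<sigma> p" "1 / \<sigma> p \<le> N" using \<sigma>(1) N by (auto simp: pos_C1_Linf_def)
  then have "1 \<le> \<sigma> p * N" by (simp add: field_simps)
  moreover have "0 \<le> M + 1" using M[OF p] \<open>0 < \<sigma> p\<close> by simp
  ultimately have "M + 1 \<le> \<sigma> p * N * (M + 1)"
    using mult_right_mono[of 1 "\<sigma> p * N" "M + 1"] by simp
  also have "\<dots> \<le> \<sigma> p * ((1 + fst p * t) * (1 - snd p * t))^2"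
    using big \<open>0 < \<sigma> p\<close> by (simp add: mult.assoc mult.commute[of N])
  also have "\<dots> = \<sigma> (flow p t)"
    using realizable_along_flow[OF \<sigma> off_axes path] by simp
  also have "\<dots> \<le> M" using M path ends_in_segment(2) by blast
  finally show False by simp
qed

lemma flow_expands_along_antidiagonal:
  assumes p: "p \<in> {a<..<b} \<times> {c<..<d}" "a \<le> 0" "0 \<le> b" "c \<le> 0" "0 \<le> d"
    and antidiagonal: "snd p = - fst p" "fst p \<noteq> 0"
  shows "\<exists>t. flow p ` closed_segment 0 t \<subseteq> {a<..<b} \<times> {c<..<d} \<and>
    C \<le> ((1 + fst p * t) * (1 - snd p * t))^2"
proof (intro exI conjI)
  define t where "t = \<bar>C\<bar> / fst p"
  have "fst p * t = \<bar>C\<bar>" using antidiagonal by (simp add: t_def)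
  have "0 \<le> fst p * s" if s: "s \<in> closed_segment 0 t" for s
  proof -
    obtain u where "0 \<le> u" "s = u * t" using s by (auto simp: in_segment)
    then have "fst p * s = u * \<bar>C\<bar>" using \<open>fst p * t = \<bar>C\<bar>\<close> by (simp add: algebra_simps)
    with \<open>0 \<le> u\<close> show ?thesis by simp
  qed
  then show "flow p ` closed_segment 0 t \<subseteq> {a<..<b} \<times> {c<..<d}"
    using flow_mem_box[OF p] antidiagonal(1) by (intro image_subsetI) simp
  have "C \<le> 1 + \<bar>C\<bar>" by simp
  also have "\<dots> \<le> (1 + \<bar>C\<bar>)^4"
    by (rule self_le_power) auto
  also have "\<dots> = ((1 + \<bar>C\<bar>) * (1 + \<bar>C\<bar>))^2"
    by algebra
  also have "\<dots> = ((1 + fst p * t) * (1 - snd p * t))^2"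
    using \<open>fst p * t = \<bar>C\<bar>\<close> antidiagonal(1) by simp
  finally show "C \<le> ((1 + fst p * t) * (1 - snd p * t))^2" .
qed

lemma flow_expands_in_first_quadrant:
  "\<exists>p t. flow p ` closed_segment 0 t \<subseteq> {0<..<1} \<times> {0<..<1} \<and>
    C \<le> ((1 + fst p * t) * (1 - snd p * t))^2"
proof (intro exI conjI)
  define b where "b = 1 / (8 * (\<bar>C\<bar> + 1))"
  define t where "t = 1 / (2 * b)"
  have b: "0 < b" "b \<le> 1/8" by (auto simp: b_def field_simps)
  have "closed_segment 0 t = {0..t}" using b by (simp add: t_def closed_segment_eq_real_ivl)
  moreover have "flow (1/2, b) s \<in> {0<..<1} \<times> {0<..<1}" if "0 \<le> s" "s \<le> t" for s
  proof -
    have "b * s \<le> 1/2" using that b by (simp add: t_def field_simps)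
    then show ?thesis using that b by (auto simp: flow_def field_simps)
  qed
  ultimately show "flow (1/2, b) ` closed_segment 0 t \<subseteq> {0<..<1} \<times> {0<..<1}"
    by (metis atLeastAtMost_iff image_subsetI)
  have "(1 + fst (1/2, b) * t) * (1 - snd (1/2, b) * t) = \<bar>C\<bar> + 3/2"
    using b by (simp add: t_def b_def field_simps)
  moreover have "\<bar>C\<bar> + 3/2 \<le> (\<bar>C\<bar> + 3/2)^2"
    by (rule self_le_power) auto
  ultimately show "C \<le> ((1 + fst (1/2, b) * t) * (1 - snd (1/2, b) * t))^2" by simp
qed

text \<open>The reflection \<open>(x, y) \<mapsto> (-y, -x)\<close> leaves \<open>u\<close> invariant.\<close>
lemma flow_reflect: "flow (- snd p, - fst p) t = (- snd (flow p t), - fst (flow p t))"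
  by (simp add: flow_def)

lemma flow_expands_in_third_quadrant:
  "\<exists>p t. flow p ` closed_segment 0 t \<subseteq> {-1<..<0} \<times> {-1<..<0} \<and>
    C \<le> ((1 + fst p * t) * (1 - snd p * t))^2"
proof -
  obtain p t where path: "flow p ` closed_segment 0 t \<subseteq> {0<..<1} \<times> {0<..<1}"
    and big: "C \<le> ((1 + fst p * t) * (1 - snd p * t))^2"
    using flow_expands_in_first_quadrant by blast
  have "flow (- snd p, - fst p) ` closed_segment 0 t \<subseteq> {-1<..<0} \<times> {-1<..<0}"
    using path by (fastforce simp: flow_reflect)
  moreover have "C \<le> ((1 + fst (- snd p, - fst p) * t) * (1 - snd (- snd p, - fst p) * t))^2"
    using big by (simp add: mult.commute)
  ultimately show ?thesis by blast
qed

text \<open>Since \<open>1/x + 1/y\<close> is also constant along orbits, \<open>f(1/x + 1/y) / (xy)\<^sup>2\<close> solves the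
  equation for every \<open>f\<close>; the choice \<open>f(c) = c\<^sup>-\<^sup>4\<close> gives a bounded solution.\<close>
definition sigma0 :: "real \<times> real \<Rightarrow> real" where
  "sigma0 p = (fst p * snd p)^2 / (fst p + snd p)^4"

lemma sigma0_has_derivative:
  assumes "fst p + snd p \<noteq> 0"
  shows "(sigma0 has_derivative (\<lambda>h.
    2 * fst p * (snd p)^2 * (snd p - fst p) / (fst p + snd p)^5 * fst h +
    2 * (fst p)^2 * snd p * (fst p - snd p) / (fst p + snd p)^5 * snd h)) (at p)"
proof -
  have power14: "(fst p + snd p)^14 = (fst p + snd p)^13 * (fst p + snd p)"
    by (simp add: power_Suc2[symmetric])
  show ?thesis
    unfolding sigma0_def[abs_def] using assms
    by (auto intro!: derivative_eq_intros
        simp: fun_eq_iff field_simps power14 algebra_simps power2_eq_square)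
qed

lemma sigma0_realizes:
  assumes same_sign: "\<forall>p\<in>\<Omega>. 0 < fst p * snd p"
  shows "pos_C1_Linf \<Omega> sigma0 \<and> realizable_with \<Omega> sigma0"
proof -
  define sx :: "real \<times> real \<Rightarrow> real"
    where "sx p = 2 * fst p * (snd p)^2 * (snd p - fst p) / (fst p + snd p)^5" for p
  define sy :: "real \<times> real \<Rightarrow> real"
    where "sy p = 2 * (fst p)^2 * snd p * (fst p - snd p) / (fst p + snd p)^5" for p
  have S: "fst p + snd p \<noteq> 0" if "p \<in> \<Omega>" for p
  proof
    assume "fst p + snd p = 0"
    then have "fst p * snd p \<le> 0" by (simp add: eq_neg_iff_add_eq_0[symmetric])
    with same_sign that show False by fastforce
  qed
  have deriv: "(sigma0 has_derivative (\<lambda>h. sx p * fst h + sy p * snd h)) (at p)" if "p \<in> \<Omega>" for p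
    unfolding sx_def sy_def by (rule sigma0_has_derivative[OF S[OF that]])
  have pos: "0 < sigma0 p" if "p \<in> \<Omega>" for p
    using same_sign S[OF that] that unfolding sigma0_def
    by (intro divide_pos_pos) (auto simp: zero_less_power_eq)
  have le_1: "sigma0 p \<le> 1" if "p \<in> \<Omega>" for p
  proof -
    have "0 \<le> (fst p - snd p)^2" by simp
    then have "fst p * snd p \<le> (fst p + snd p)^2"
      using same_sign that by (auto simp: power2_eq_square algebra_simps)
    then have "(fst p * snd p)^2 \<le> ((fst p + snd p)^2)^2"
      using same_sign that by (intro power_mono) auto
    then show ?thesis using S[OF that] by (simp add: sigma0_def zero_less_power_eq)
  qed
  have "continuous_on \<Omega> sx" "continuous_on \<Omega> sy"
    unfolding sx_def sy_def by (auto intro!: continuous_intros dest: S)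
  moreover have "\<forall>x\<in>sigma0 ` \<Omega>. norm x \<le> 1"
    using pos le_1 by (fastforce simp: abs_le_iff)
  ultimately have "pos_C1_Linf \<Omega> sigma0"
    unfolding pos_C1_Linf_def bounded_iff using pos deriv by blast
  moreover have "sy p * (snd p)^2 - sx p * (fst p)^2 = 2 * sigma0 p * (fst p - snd p)" if "p \<in> \<Omega>" for p
  proof -
    obtain x y where p: "p = (x, y)" by fastforce
    have "sy p * (snd p)^2 - sx p * (fst p)^2 = 2 * (x * y)^2 * (x - y) * (x + y) / (x + y)^5"
      unfolding sx_def sy_def p by (simp add: diff_divide_distrib[symmetric]) algebra
    also have "\<dots> = 2 * (x * y)^2 * (x - y) * (x + y) / ((x + y)^4 * (x + y))"
      by (simp only: power_Suc2[symmetric] numeral_eq_Suc) simp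
    also have "\<dots> = 2 * sigma0 p * (fst p - snd p)"
      using S[OF that] by (simp add: sigma0_def p)
    finally show ?thesis .
  qed
  then have "realizable_with \<Omega> sigma0"
    using realizable_with_iff[OF deriv] by blast
  ultimately show ?thesis ..
qed

theorem proposition4p1:
  shows
   "(pos_stable ({0<..<1} \<times> {-1<..<0}) grad_u (0,0) \<and>
     \<not> (\<exists>\<sigma>. pos_C1_Linf ({0<..<1} \<times> {-1<..<0}) \<sigma> \<and>
            realizable_with ({0<..<1} \<times> {-1<..<0}) \<sigma>)) \<and>
    (neg_stable ({-1<..<0} \<times> {0<..<1}) grad_u (0,0) \<and>
     \<not> (\<exists>\<sigma>. pos_C1_Linf ({-1<..<0} \<times> {0<..<1}) \<sigma> \<and>
            realizable_with ({-1<..<0} \<times> {0<..<1}) \<sigma>)) \<and>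
    (\<forall>\<Omega> \<in> {{0<..<1} \<times> {0<..<1}, {-1<..<0} \<times> {-1<..<0}}.
       \<not> pos_stable \<Omega> grad_u (0,0) \<and> \<not> neg_stable \<Omega> grad_u (0,0) \<and>
       (\<exists>\<sigma>0. pos_C1_Linf \<Omega> \<sigma>0 \<and> realizable_with \<Omega> \<sigma>0) \<and>
       \<not> (\<exists>\<sigma>. pos_C1_Linf \<Omega> \<sigma> \<and> bounded ((\<lambda>p. 1 / \<sigma> p) ` \<Omega>) \<and>
              realizable_with \<Omega> \<sigma>))"
proof (intro conjI ballI)
  show "\<not> (\<exists>\<sigma>. pos_C1_Linf ({0<..<1} \<times> {-1<..<0}) \<sigma> \<and> realizable_with ({0<..<1} \<times> {-1<..<0}) \<sigma>)"
    by (rule not_realizable_if_flow_expands[OF _ _ flow_expands_along_antidiagonal,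
          where p = "(1/2, -1/2)"]) auto
  show "\<not> (\<exists>\<sigma>. pos_C1_Linf ({-1<..<0} \<times> {0<..<1}) \<sigma> \<and> realizable_with ({-1<..<0} \<times> {0<..<1}) \<sigma>)"
    by (rule not_realizable_if_flow_expands[OF _ _ flow_expands_along_antidiagonal,
          where p = "(-1/2, 1/2)"]) auto
  fix \<Omega> assume \<Omega>: "\<Omega> \<in> {{0<..<1} \<times> {0<..<1}, {-1<..<0} \<times> {-1<..<0} :: (real \<times> real) set}"
  then have same_sign: "\<forall>p\<in>\<Omega>. 0 < fst p * snd p" and origin: "(0,0) \<in> closure \<Omega>"
    by (auto simp: closure_Times mult_neg_neg)
  show "\<not> pos_stable \<Omega> grad_u (0,0)"
    using same_sign by (intro not_pos_stable[OF origin]) (auto simp: zero_less_mult_iff)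
  show "\<not> neg_stable \<Omega> grad_u (0,0)"
    using same_sign by (intro not_neg_stable[OF origin]) (auto simp: zero_less_mult_iff)
  show "\<exists>\<sigma>0. pos_C1_Linf \<Omega> \<sigma>0 \<and> realizable_with \<Omega> \<sigma>0"
    using sigma0_realizes[OF same_sign] by blast
  show "\<not> (\<exists>\<sigma>. pos_C1_Linf \<Omega> \<sigma> \<and> bounded ((\<lambda>p. 1 / \<sigma> p) ` \<Omega>) \<and> realizable_with \<Omega> \<sigma>)"
    using \<Omega> same_sign flow_expands_in_first_quadrant flow_expands_in_third_quadrant
    by (intro not_realizable_bounded_inverse_if_flow_expands) auto
qed (fact pos_stable_fourth_quadrant neg_stable_second_quadrant)+

end
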